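(* Let $p,q\in\mathbb{N}$ be co-prime with $p/q\in[0,1]$. For $n\ge2$ let $Z_n=\{z\in B^n:\ p\sum_{i=1}^n\alpha_i2^{-i}-q\sum_{i=1}^n\beta_i2^{-i}=0\}$, where $z_i=(\alpha_i,\beta_i)$. Then $$\log\frac{\mathcal{N}_n(D,D')}{\mathcal{N}_{n-1}(D,D')}\le\sum_{x\in Z_n}\sup_{y\in[x]}\phi(y).$$
   Context: $D=\{0,1,p/q\}$, $D'=\{\frac{x+i}{2}:i\in D\}$, and $\mathcal{N}_n(D,D')$ is the number of pairs $(a,b)\in D^n\times D^n$ with $\sum_{i=1}^na_i2^{-i}=\sum_{i=1}^nb_i2^{-i}$ (equivalently $F_a=F_b$ where $F_a=F_{a_1}\circ\cdots\circ F_{a_n}$, $F_i(x)=\frac{x+i}2$). $B=\{(0,0),(1,0),(0,1),(1,1)\}$, ordered this way to index rows/columns $1,\dots,4$; for $x\in B^n$, $[x]=\{\omega\in B^{\mathbb{N}}:\omega_1\cdots\omega_n=x\}$. The matrices are $A_{(0,0)}=\begin{pmatrix}3&1&1&1\\0&1&0&0\\0&0&1&0\\0&0&0&1\end{pmatrix}$, $A_{(1,0)}=\begin{pmatrix}1&0&1&0\\1&3&0&1\\0&0&0&0\\0&0&1&1\end{pmatrix}$, $A_{(0,1)}=\begin{pmatrix}1&1&0&0\\0&0&0&0\\1&0&3&1\\0&1&0&1\end{pmatrix}$, $A_{(1,1)}=\begin{pmatrix}1&0&0&0\\0&1&0&0\\0&0&1&0\\1&1&1&3\end{pmatrix}$,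 and for $z\in B^{\mathbb{N}}$, $$\phi(z)=\limsup_{n\to\infty}\log\frac{(1,1,1,1)A_{z_1}A_{z_2}\cdots A_{z_n}(1,0,0,0)^T}{(1,1,1,1)A_{z_2}A_{z_3}\cdots A_{z_n}(1,0,0,0)^T}.$$ *)

theory Defs
  imports "HOL-Analysis.Analysis"
begin

definition digitD :: "nat \<Rightarrow> nat \<Rightarrow> real set" where
  "digitD p q = {0, 1, real p / real q}"

text \<open>N_n(D,D'): number of pairs (a,b) in D^n x D^n with equal dyadic sums
  sum_{i=1}^n a_i 2^{-i} = sum_{i=1}^n b_i 2^{-i}.  Words are lists, a!i = a_{i+1}.\<close>
definition dyadic_sum :: "real list \<Rightarrow> real" where
  "dyadic_sum a = (\<Sum>i<length a. a ! i / 2 ^ (i + 1))"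

definition countN :: "nat \<Rightarrow> nat \<Rightarrow> nat \<Rightarrow> nat" where
  "countN p q n = card {(a, b). length a = n \<and> set a \<subseteq> digitD p q \<and>
                               length b = n \<and> set b \<subseteq> digitD p q \<and>
                               dyadic_sum a = dyadic_sum b}"

text \<open>Alphabet B = {(0,0),(1,0),(0,1),(1,1)}; matrix indices 1..4 are 0..3 here.\<close>
definition alphB :: "(nat \<times> nat) set" where
  "alphB = {(0,0), (1,0), (0,1), (1,1)}"

definition Amat :: "nat \<times> nat \<Rightarrow> nat \<Rightarrow> nat \<Rightarrow> real" where
  "Amat z i j =
     (if z = (0,0) then [[3,1,1,1],[0,1,0,0],[0,0,1,0],[0,0,0,1]] ! i ! j
      else if z = (1,0) then [[1,0,1,0],[1,3,0,1],[0,0,0,0],[0,0,1,1]] ! i ! j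
      else if z = (0,1) then [[1,1,0,0],[0,0,0,0],[1,0,3,1],[0,1,0,1]] ! i ! j
      else if z = (1,1) then [[1,0,0,0],[0,1,0,0],[0,0,1,0],[1,1,1,3]] ! i ! j
      else 0)"

definition vecmat :: "(nat \<Rightarrow> real) \<Rightarrow> (nat \<Rightarrow> nat \<Rightarrow> real) \<Rightarrow> nat \<Rightarrow> real" where
  "vecmat v M = (\<lambda>j. \<Sum>i<4. v i * M i j)"

definition word_val :: "(nat \<times> nat) list \<Rightarrow> real" where
  "word_val ws = foldl (\<lambda>v a. vecmat v (Amat a)) (\<lambda>_. 1) ws 0"

text \<open>phi(z) for z in B^N (z 0 = z_1), as an extended real limsup.\<close>
definition phi :: "(nat \<Rightarrow> nat \<times> nat) \<Rightarrow> ereal" where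
  "phi z = limsup (\<lambda>n. ereal (ln (word_val (map z [0..<n]) / word_val (map z [1..<n]))))"

definition cyl :: "(nat \<times> nat) list \<Rightarrow> (nat \<Rightarrow> nat \<times> nat) set" where
  "cyl x = {\<omega>. (\<forall>k. \<omega> k \<in> alphB) \<and> (\<forall>i<length x. \<omega> i = x ! i)}"

definition Zset :: "nat \<Rightarrow> nat \<Rightarrow> nat \<Rightarrow> (nat \<times> nat) list set" where
  "Zset p q n = {z. length z = n \<and> set z \<subseteq> alphB \<and>
      real p * (\<Sum>i<n. real (fst (z ! i)) / 2 ^ (i + 1))
      - real q * (\<Sum>i<n. real (snd (z ! i)) / 2 ^ (i + 1)) = 0}"

end

theory Submission
  imports Defs
begin

text \<open>
  Every column of every matrix A_z sums to at least 2, so prepending a letter at least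
  doubles (1,1,1,1) A_z1 ... A_zk (1,0,0,0)^T; hence phi >= ln 2 on B^N, and the entry 3 of
  A_(0,0) gives phi >= ln 3 on the zero sequence. The right-hand side is therefore at least
  ln (3 * 2^(|Z_n| - 1)), and Z_n contains, for every t with t q < 2^n, the word whose two
  coordinates are the binary expansions of t q / 2^n and t p / 2^n.

  Splitting off the last digits writes N_n as a sum, over the nine pairs (x, y) of last
  digits, of the number of pairs of words of length n - 1 whose dyadic sums differ by
  (y - x) / 2^n. Each of these numbers is at most N_(n-1) by Cauchy-Schwarz. For x ~= y,
  clearing denominators and using that p and q are coprime shows that it vanishes when
  2^n <= q, and, when 2^n <= 2 q, unless the parities of the coefficients of x - y with
  respect to 1 and p/q are those of p and q. So N_n / N_(n-1) is at most 3, 5 or 9 in the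
  three ranges of q, and in each range this is at most 3 * 2^(|Z_n| - 1).
\<close>

section \<open>Lower bounds for phi\<close>

definition vec_word :: "(nat \<Rightarrow> real) \<Rightarrow> (nat \<times> nat) list \<Rightarrow> nat \<Rightarrow> real" where
  "vec_word u ws = foldl (\<lambda>v a. vecmat v (Amat a)) u ws"

lemma vec_word_Cons: "vec_word u (a # ws) = vec_word (vecmat u (Amat a)) ws"
  by (simp add: vec_word_def)

lemma word_val_eq_vec_word: "word_val ws = vec_word (\<lambda>_. 1) ws 0"
  by (simp add: word_val_def vec_word_def)

lemma less_4_cases: "(i::nat) < 4 \<Longrightarrow> i = 0 \<or> i = 1 \<or> i = 2 \<or> i = 3"
  by auto

lemma sum_lessThan_4: "(\<Sum>i<4. f i) = f 0 + f 1 + f 2 + f 3" for f :: "nat \<Rightarrow> real"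
  by (simp add: eval_nat_numeral)

lemma Amat_nonneg: "i < 4 \<Longrightarrow> j < 4 \<Longrightarrow> 0 \<le> Amat z i j"
  using less_4_cases[of i] less_4_cases[of j] by (auto simp: Amat_def)

lemma Amat_column_sum_ge_2: "z \<in> alphB \<Longrightarrow> j < 4 \<Longrightarrow> 2 \<le> vecmat (\<lambda>_. 1) (Amat z) j"
  using less_4_cases[of j] by (auto simp: vecmat_def sum_lessThan_4 Amat_def alphB_def)

lemma vec_word_mono_scaled:
  assumes "\<forall>i<4. c * u i \<le> v i" and "j < 4"
  shows "c * vec_word u ws j \<le> vec_word v ws j"
  using assms
proof (induction ws arbitrary: u v)
  case Nil
  then show ?case by (simp add: vec_word_def)
next
  case (Cons a ws)
  have "c * vecmat u (Amat a) i \<le> vecmat v (Amat a) i" if "i < 4" for i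
  proof -
    have "c * vecmat u (Amat a) i = (\<Sum>k<4. (c * u k) * Amat a k i)"
      by (simp add: vecmat_def sum_distrib_left mult.assoc)
    also have "\<dots> \<le> (\<Sum>k<4. v k * Amat a k i)"
      by (intro sum_mono mult_right_mono) (use Cons.prems Amat_nonneg that in auto)
    finally show ?thesis by (simp add: vecmat_def)
  qed
  then show ?case using Cons by (simp add: vec_word_Cons)
qed

lemma word_val_Cons_ge: "a \<in> alphB \<Longrightarrow> 2 * word_val ws \<le> word_val (a # ws)"
  unfolding word_val_eq_vec_word vec_word_Cons
  by (rule vec_word_mono_scaled) (use Amat_column_sum_ge_2 in auto)

lemma word_val_ge_power: "set ws \<subseteq> alphB \<Longrightarrow> 2 ^ length ws \<le> word_val ws"
proof (induction ws)
  case Nil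
  then show ?case by (simp add: word_val_def)
next
  case (Cons a ws)
  then show ?case using word_val_Cons_ge[of a ws] by simp
qed

lemma word_val_pos: "set ws \<subseteq> alphB \<Longrightarrow> 0 < word_val ws"
  using word_val_ge_power[of ws] zero_less_power[of "2::real" "length ws"] by linarith

lemma word_val_replicate_zero: "word_val (replicate k (0,0)) = 3 ^ k"
proof -
  have "vec_word u (replicate k (0,0)) 0 = 3 ^ k * u 0" for u
  proof (induction k arbitrary: u)
    case 0
    then show ?case by (simp add: vec_word_def)
  next
    case (Suc k)
    have "vecmat u (Amat (0,0)) 0 = 3 * u 0"
      by (simp add: vecmat_def sum_lessThan_4 Amat_def)
    with Suc show ?case by (simp add: vec_word_Cons)
  qed
  then show ?thesis by (simp add: word_val_eq_vec_word)
qed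

lemma ln_le_phi:
  assumes c: "c > 0"
    and ratio: "\<And>n. n \<ge> 1 \<Longrightarrow> c * word_val (map y [1..<n]) \<le> word_val (map y [0..<n])"
    and pos: "\<And>n. word_val (map y [1..<n]) > 0"
  shows "ereal (ln c) \<le> phi y"
  unfolding phi_def
proof (rule le_Limsup)
  show "\<forall>\<^sub>F n in sequentially.
          ereal (ln c) \<le> ereal (ln (word_val (map y [0..<n]) / word_val (map y [1..<n])))"
    using eventually_ge_at_top[of 1]
  proof eventually_elim
    case (elim n)
    then have "c \<le> word_val (map y [0..<n]) / word_val (map y [1..<n])"
      using ratio pos by (simp add: field_simps)
    then show ?case using c by simp
  qed
qed simp

lemma ln2_le_phi:
  assumes "\<forall>k. y k \<in> alphB"
  shows "ereal (ln 2) \<le> phi y"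
proof (rule ln_le_phi)
  fix n :: nat
  have "set (map y [1..<n]) \<subseteq> alphB" using assms by auto
  then show "word_val (map y [1..<n]) > 0"
    by (rule word_val_pos)
  assume "n \<ge> 1"
  then have "map y [0..<n] = y 0 # map y [1..<n]" by (simp add: upt_conv_Cons)
  then show "2 * word_val (map y [1..<n]) \<le> word_val (map y [0..<n])"
    using word_val_Cons_ge assms by simp
qed simp

lemma ln3_le_phi_zero: "ereal (ln 3) \<le> phi (\<lambda>_. (0,0))"
proof (rule ln_le_phi)
  fix n :: nat
  have words: "map (\<lambda>_. (0,0)) [k..<n] = replicate (n - k) (0::nat, 0::nat)" for k
    by (simp add: map_replicate_const)
  show "word_val (map (\<lambda>_. (0,0)) [1..<n]) > 0"
    unfolding words word_val_replicate_zero by simp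
  assume "n \<ge> 1"
  then show "3 * word_val (map (\<lambda>_. (0,0)) [1..<n]) \<le> word_val (map (\<lambda>_. (0,0)) [0..<n])"
    unfolding words word_val_replicate_zero by (cases n) auto
qed simp

lemma ln2_le_SUP_cyl:
  assumes "set x \<subseteq> alphB"
  shows "ereal (ln 2) \<le> (SUP y\<in>cyl x. phi y)"
proof -
  define y where "y k = (if k < length x then x ! k else (0,0))" for k
  have y: "\<forall>k. y k \<in> alphB"
    using assms nth_mem by (auto simp: y_def alphB_def)
  then have "y \<in> cyl x" by (simp add: cyl_def y_def)
  then show ?thesis using ln2_le_phi[OF y] by (blast intro: SUP_upper2)
qed

lemma ln3_le_SUP_cyl_zero: "ereal (ln 3) \<le> (SUP y\<in>cyl (replicate n (0,0)). phi y)"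
proof -
  have "(\<lambda>_. (0,0)) \<in> cyl (replicate n (0,0))" by (simp add: cyl_def alphB_def)
  then show ?thesis using ln3_le_phi_zero by (blast intro: SUP_upper2)
qed

section \<open>Counting pairs of words with a given gap\<close>

lemma card_pairs_diff_eq_sum_fibres:
  fixes S :: "'a \<Rightarrow> real"
  assumes "finite A"
  defines "fibre t \<equiv> card {a \<in> A. S a = t}"
  shows "card {(a, b). a \<in> A \<and> b \<in> A \<and> S a - S b = d} = (\<Sum>t\<in>S ` A. fibre t * fibre (t - d))"
proof -
  have "{(a, b). a \<in> A \<and> b \<in> A \<and> S a - S b = d} = Sigma A (\<lambda>a. {b \<in> A. S b = S a - d})"
    by auto
  then have "card {(a, b). a \<in> A \<and> b \<in> A \<and> S a - S b = d} = (\<Sum>a\<in>A. fibre (S a - d))"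
    using assms by (simp add: card_SigmaI fibre_def)
  also have "\<dots> = (\<Sum>t\<in>S ` A. \<Sum>a\<in>{x\<in>A. S x = t}. fibre (S a - d))"
    by (rule sum.image_gen[OF \<open>finite A\<close>])
  also have "\<dots> = (\<Sum>t\<in>S ` A. fibre t * fibre (t - d))"
    by (rule sum.cong) (auto simp: fibre_def)
  finally show ?thesis .
qed

text \<open>The correlation of the fibre sizes of S is maximal at the shift 0 (Cauchy-Schwarz).\<close>
lemma card_pairs_diff_le_card_pairs_eq:
  fixes S :: "'a \<Rightarrow> real"
  assumes "finite A"
  shows "card {(a, b). a \<in> A \<and> b \<in> A \<and> S a - S b = d}
           \<le> card {(a, b). a \<in> A \<and> b \<in> A \<and> S a - S b = 0}"
proof -
  define f where "f t = card {a \<in> A. S a = t}" for t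
  define T where "T = S ` A"
  have "finite T" using assms by (simp add: T_def)
  have f_outside: "f s = 0" if "s \<notin> T" for s
  proof -
    have "{a \<in> A. S a = s} = {}" using that by (auto simp: T_def)
    then show ?thesis unfolding f_def by (simp only: card.empty)
  qed
  have "(\<Sum>t\<in>T. f (t - d) * f (t - d)) = (\<Sum>s\<in>(\<lambda>t. t - d) ` T. f s * f s)"
    by (simp add: sum.reindex inj_on_def)
  also have "\<dots> = (\<Sum>s\<in>(\<lambda>t. t - d) ` T \<inter> T. f s * f s)"
    by (rule sum.mono_neutral_right) (use \<open>finite T\<close> f_outside in auto)
  also have "\<dots> \<le> (\<Sum>s\<in>T. f s * f s)"
    by (rule sum_mono2) (use \<open>finite T\<close> in auto)
  finally have shifted: "(\<Sum>t\<in>T. f (t - d) * f (t - d)) \<le> (\<Sum>t\<in>T. f t * f t)" .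
  have "2 * (\<Sum>t\<in>T. f t * f (t - d)) = (\<Sum>t\<in>T. 2 * (f t * f (t - d)))"
    by (simp add: sum_distrib_left)
  also have "\<dots> \<le> (\<Sum>t\<in>T. f t * f t + f (t - d) * f (t - d))"
  proof (rule sum_mono)
    fix t
    have "real (2 * (f t * f (t - d))) \<le> real (f t * f t + f (t - d) * f (t - d))"
      using sum_squares_ge_zero[of "real (f t) - real (f (t - d))" 0] by (simp add: algebra_simps)
    then show "2 * (f t * f (t - d)) \<le> f t * f t + f (t - d) * f (t - d)"
      by (simp only: of_nat_le_iff)
  qed
  also have "\<dots> \<le> 2 * (\<Sum>t\<in>T. f t * f t)"
    using shifted by (simp add: sum.distrib)
  finally have "(\<Sum>t\<in>T. f t * f (t - d)) \<le> (\<Sum>t\<in>T. f t * f (t - 0))"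
    by simp
  then show ?thesis
    unfolding card_pairs_diff_eq_sum_fibres[OF assms] by (simp only: T_def f_def)
qed

definition digit_words :: "nat \<Rightarrow> nat \<Rightarrow> nat \<Rightarrow> real list set" where
  "digit_words p q m = {a. length a = m \<and> set a \<subseteq> digitD p q}"

definition gap_count :: "nat \<Rightarrow> nat \<Rightarrow> nat \<Rightarrow> real \<Rightarrow> nat" where
  "gap_count p q m d = card {(a, b). a \<in> digit_words p q m \<and> b \<in> digit_words p q m \<and>
                                    dyadic_sum a - dyadic_sum b = d}"

lemma finite_digit_words: "finite (digit_words p q m)"
proof -
  have "digit_words p q m = {xs. set xs \<subseteq> digitD p q \<and> length xs = m}"
    by (auto simp: digit_words_def)
  then show ?thesis
    using finite_lists_length_eq[of "digitD p q" m] by (simp add: digitD_def)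
qed

lemma countN_eq_gap_count_0: "countN p q m = gap_count p q m 0"
  unfolding countN_def gap_count_def digit_words_def by (rule arg_cong[where f = card]) auto

lemma gap_count_le_countN: "gap_count p q m d \<le> countN p q m"
  unfolding countN_eq_gap_count_0 gap_count_def
  by (rule card_pairs_diff_le_card_pairs_eq[OF finite_digit_words])

lemma dyadic_sum_snoc: "dyadic_sum (a @ [x]) = dyadic_sum a + x / 2 ^ (length a + 1)"
  by (simp add: dyadic_sum_def nth_append)

lemma dyadic_sum_Cons: "dyadic_sum (x # a) = x / 2 + dyadic_sum a / 2"
  unfolding dyadic_sum_def length_Cons sum.lessThan_Suc_shift
  by (simp add: sum_divide_distrib power_commutes del: sum.lessThan_Suc)

lemma countN_Suc_eq_sum_gap_count:
  "countN p q (Suc m) =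
     (\<Sum>x\<in>digitD p q. \<Sum>y\<in>digitD p q. gap_count p q m ((y - x) / 2 ^ Suc m))"
proof -
  define D where "D = digitD p q"
  define G where "G = Sigma (D \<times> D) (\<lambda>(x, y). {(a, b). a \<in> digit_words p q m \<and>
      b \<in> digit_words p q m \<and> dyadic_sum a - dyadic_sum b = (y - x) / 2 ^ Suc m})"
  define append_last where "append_last = (\<lambda>((x::real, y::real), (a, b)). (a @ [x], b @ [y]))"
  have snoc_eq: "dyadic_sum (a @ [x]) = dyadic_sum (b @ [y]) \<longleftrightarrow>
      dyadic_sum a - dyadic_sum b = (y - x) / 2 ^ Suc m"
    if "length a = m" "length b = m" for a b :: "real list" and x y
    using that by (auto simp: dyadic_sum_snoc field_simps)
  have "{(a, b). length a = Suc m \<and> set a \<subseteq> D \<and> length b = Suc m \<and> set b \<subseteq> D \<and>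
           dyadic_sum a = dyadic_sum b} = append_last ` G"
  proof (intro equalityI subsetI)
    fix z
    assume "z \<in> {(a, b). length a = Suc m \<and> set a \<subseteq> D \<and> length b = Suc m \<and> set b \<subseteq> D \<and>
                        dyadic_sum a = dyadic_sum b}"
    then obtain a' b' where ab': "z = (a', b')" "length a' = Suc m" "length b' = Suc m"
        "set a' \<subseteq> D" "set b' \<subseteq> D" "dyadic_sum a' = dyadic_sum b'"
      by auto
    obtain a x where a: "a' = a @ [x]" using ab'(2) by (cases a' rule: rev_cases) auto
    obtain b y where b: "b' = b @ [y]" using ab'(3) by (cases b' rule: rev_cases) auto
    have z: "z = (a @ [x], b @ [y])" "length a = m" "length b = m"
        "set a \<subseteq> D" "set b \<subseteq> D" "x \<in> D" "y \<in> D" "dyadic_sum (a @ [x]) = dyadic_sum (b @ [y])"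
      using ab' unfolding a b by auto
    then have "((x, y), (a, b)) \<in> G"
      using snoc_eq by (auto simp: G_def digit_words_def D_def)
    then show "z \<in> append_last ` G"
      using z(1) by (force simp: append_last_def)
  next
    fix z
    assume "z \<in> append_last ` G"
    then show "z \<in> {(a, b). length a = Suc m \<and> set a \<subseteq> D \<and> length b = Suc m \<and> set b \<subseteq> D \<and>
                          dyadic_sum a = dyadic_sum b}"
      using snoc_eq by (auto simp: append_last_def G_def digit_words_def D_def)
  qed
  then have "countN p q (Suc m) = card (append_last ` G)"
    by (simp add: countN_def D_def)
  also have "\<dots> = card G"
    by (rule card_image) (auto simp: inj_on_def append_last_def)
  also have "\<dots> = (\<Sum>(x, y)\<in>D \<times> D. gap_count p q m ((y - x) / 2 ^ Suc m))"
  proof -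
    have "finite {(a, b). a \<in> digit_words p q m \<and> b \<in> digit_words p q m \<and> P a b}" for P
      by (rule finite_subset[of _ "digit_words p q m \<times> digit_words p q m"])
        (use finite_digit_words in auto)
    then show ?thesis
      unfolding G_def gap_count_def
      by (subst card_SigmaI) (auto simp: D_def digitD_def split_def)
  qed
  finally show ?thesis
    by (simp add: D_def sum.cartesian_product)
qed

section \<open>Which gaps occur\<close>

definition digit_of :: "nat \<Rightarrow> nat \<Rightarrow> int \<times> int \<Rightarrow> real" where
  "digit_of p q e = of_int (fst e) + of_int (snd e) * real p / real q"

definition digit_vecs :: "(int \<times> int) set" where
  "digit_vecs = {(0, 0), (1, 0), (0, 1)}"

lemma digitD_eq_image_digit_of: "digitD p q = digit_of p q ` digit_vecs"
  by (simp add: digitD_def digit_vecs_def digit_of_def)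

lemma dyadic_sum_scaled_repr:
  assumes "set a \<subseteq> digitD p q" and "q > 0"
  obtains U :: nat and V :: nat where "U < 2 ^ length a" "V < 2 ^ length a"
    "real q * 2 ^ length a * dyadic_sum a = real q * real U + real p * real V"
proof -
  from assms(1) have "\<exists>U V :: nat. U < 2 ^ length a \<and> V < 2 ^ length a \<and>
      real q * 2 ^ length a * dyadic_sum a = real q * real U + real p * real V"
  proof (induction a)
    case Nil
    show ?case by (intro exI[of _ 0]) (simp add: dyadic_sum_def)
  next
    case (Cons x a)
    then obtain U :: nat and V :: nat where UV: "U < 2 ^ length a" "V < 2 ^ length a"
        "real q * 2 ^ length a * dyadic_sum a = real q * real U + real p * real V"
      by auto
    have scaled: "real q * 2 ^ length (x # a) * dyadic_sum (x # a) =
        real q * 2 ^ length a * x + (real q * real U + real p * real V)"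
      using UV(3) by (simp add: dyadic_sum_Cons algebra_simps)
    consider "x = 0" | "x = 1" | "x = real p / real q"
      using Cons.prems by (auto simp: digitD_def)
    then show ?case
    proof cases
      case 1
      then show ?thesis using UV scaled by (intro exI[of _ U] exI[of _ V]) auto
    next
      case 2
      then show ?thesis using UV scaled
        by (intro exI[of _ "2 ^ length a + U"] exI[of _ V]) (auto simp: algebra_simps)
    next
      case 3
      then have "real q * 2 ^ length a * x = real p * 2 ^ length a" using assms(2) by simp
      then show ?thesis using UV scaled
        by (intro exI[of _ U] exI[of _ "2 ^ length a + V"]) (auto simp: algebra_simps)
    qed
  qed
  with that show ?thesis by blast
qed

lemma gap_count_nonzero_imp_int_relation:
  assumes "gap_count p q m ((digit_of p q e' - digit_of p q e) / 2 ^ Suc m) \<noteq> 0" and "q > 0"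
  obtains K :: int and M :: int where "\<bar>K\<bar> < 2 ^ m" "\<bar>M\<bar> < 2 ^ m"
    "2 * (int q * K + int p * M) = (fst e' - fst e) * int q + (snd e' - snd e) * int p"
proof -
  have "{(a, b). a \<in> digit_words p q m \<and> b \<in> digit_words p q m \<and>
      dyadic_sum a - dyadic_sum b = (digit_of p q e' - digit_of p q e) / 2 ^ Suc m} \<noteq> {}"
    using assms(1) unfolding gap_count_def by (intro notI) (simp only: card.empty)
  then obtain a b where ab: "a \<in> digit_words p q m" "b \<in> digit_words p q m"
      "dyadic_sum a - dyadic_sum b = (digit_of p q e' - digit_of p q e) / 2 ^ Suc m"
    by blast
  obtain U V where UV: "U < 2 ^ m" "V < 2 ^ m"
      "real q * 2 ^ m * dyadic_sum a = real q * real U + real p * real V"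
    using dyadic_sum_scaled_repr[of a p q] ab(1) assms(2) by (auto simp: digit_words_def)
  obtain U' V' where UV': "U' < 2 ^ m" "V' < 2 ^ m"
      "real q * 2 ^ m * dyadic_sum b = real q * real U' + real p * real V'"
    using dyadic_sum_scaled_repr[of b p q] ab(2) assms(2) by (auto simp: digit_words_def)
  have digit_scaled: "real q * digit_of p q e = of_int (fst e * int q + snd e * int p)" for e
    using assms(2) by (simp add: digit_of_def field_simps)
  have "2 * 2 ^ m * (dyadic_sum a - dyadic_sum b) = digit_of p q e' - digit_of p q e"
    using ab(3) by (simp add: field_simps)
  then have "real q * (2 * 2 ^ m * (dyadic_sum a - dyadic_sum b)) =
      real q * digit_of p q e' - real q * digit_of p q e"
    by (simp add: right_diff_distrib)
  then have "2 * (real q * 2 ^ m * dyadic_sum a - real q * 2 ^ m * dyadic_sum b) =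
      of_int ((fst e' - fst e) * int q + (snd e' - snd e) * int p)"
    unfolding digit_scaled by (simp add: algebra_simps)
  then have "of_int (2 * (int q * (int U - int U') + int p * (int V - int V'))) =
      (of_int ((fst e' - fst e) * int q + (snd e' - snd e) * int p) :: real)"
    unfolding UV(3) UV'(3) by (simp add: algebra_simps)
  then have "2 * (int q * (int U - int U') + int p * (int V - int V')) =
      (fst e' - fst e) * int q + (snd e' - snd e) * int p"
    by (simp only: of_int_eq_iff)
  moreover have "\<bar>int U - int U'\<bar> < 2 ^ m" "\<bar>int V - int V'\<bar> < 2 ^ m"
  proof -
    have "int x < 2 ^ m" if "x < 2 ^ m" for x :: nat
      using that by (metis of_nat_less_iff of_nat_numeral of_nat_power)
    then show "\<bar>int U - int U'\<bar> < 2 ^ m" "\<bar>int V - int V'\<bar> < 2 ^ m"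
      using UV(1,2) UV'(1,2) by (smt (verit) of_nat_0_le_iff)+
  qed
  ultimately show ?thesis using that by blast
qed

text \<open>
  Here \<open>a q + b p\<close> is \<open>q\<close> times the difference of two distinct digits and \<open>q K + p M\<close>
  is \<open>q 2\<^sup>m\<close> times the difference of the dyadic sums of two words of length \<open>m\<close>.\<close>
lemma coprime_coincidence:
  fixes p q K M N a b :: int
  assumes "coprime p q" "q > 0" "\<bar>K\<bar> < N" "\<bar>M\<bar> < N"
    and eq: "2 * (q * K + p * M) = a * q + b * p"
    and "(a, b) \<noteq> (0, 0)" "\<bar>a\<bar> \<le> 1" "\<bar>b\<bar> \<le> 1"
  shows "q < 2 * N" and "N \<le> q \<Longrightarrow> even (a + p) \<and> even (b + q)"
proof -
  have p_eq: "p * (2 * M - b) = q * (a - 2 * K)"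
    using eq by (simp add: algebra_simps)
  then have "q dvd 2 * M - b"
    using \<open>coprime p q\<close> by (metis coprime_commute coprime_dvd_mult_right_iff dvd_triv_left)
  then obtain k where k: "2 * M - b = q * k" ..
  have "q * (a - 2 * K) = q * (p * k)"
    using p_eq unfolding k by (simp add: algebra_simps)
  then have a: "a = 2 * K + p * k"
    using \<open>q > 0\<close> by simp
  have "k \<noteq> 0"
  proof
    assume "k = 0"
    then have "b = 2 * M" and "a = 2 * K" using k a by auto
    with assms(7,8) have "a = 0" and "b = 0" by presburger+
    with assms(6) show False by simp
  qed
  then have "q \<le> \<bar>q * k\<bar>" using \<open>q > 0\<close> by (simp add: abs_mult)
  then show "q < 2 * N" using k assms(4,8) by linarith
  assume "N \<le> q"
  then have "\<bar>q * k\<bar> < 2 * q" using k assms(4,8) by linarith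
  then have "odd k" using \<open>k \<noteq> 0\<close> \<open>q > 0\<close> by (auto simp: abs_mult)
  then obtain j where "k = 2 * j + 1" by (rule oddE)
  then have "a + p = 2 * (K + p * j + p)" and "b + q = 2 * (M - q * j)"
    using a k by (simp_all add: algebra_simps)
  then show "even (a + p) \<and> even (b + q)" by simp
qed

lemma gap_count_offdiag_nonzero:
  assumes "coprime p q" "q > 0" "e \<in> digit_vecs" "e' \<in> digit_vecs" "e \<noteq> e'"
    and "gap_count p q m ((digit_of p q e' - digit_of p q e) / 2 ^ Suc m) \<noteq> 0"
  shows "q < 2 ^ Suc m"
    and "2 ^ m \<le> q \<Longrightarrow> even (fst e' - fst e + int p) \<and> even (snd e' - snd e + int q)"
proof -
  obtain K M where KM: "\<bar>K\<bar> < 2 ^ m" "\<bar>M\<bar> < 2 ^ m"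
      "2 * (int q * K + int p * M) = (fst e' - fst e) * int q + (snd e' - snd e) * int p"
    using gap_count_nonzero_imp_int_relation[OF assms(6,2)] .
  have diff: "(fst e' - fst e, snd e' - snd e) \<noteq> (0, 0)"
      "\<bar>fst e' - fst e\<bar> \<le> 1" "\<bar>snd e' - snd e\<bar> \<le> 1"
    using assms(3-5) by (auto simp: digit_vecs_def prod_eq_iff)
  note coincidence = coprime_coincidence[of "int p" "int q", OF _ _ KM(1,2) _ diff]
  have "int q < 2 * 2 ^ m"
    using coincidence(1) assms(1,2) KM(3) by (simp add: mult.commute)
  then show "q < 2 ^ Suc m"
    by (metis of_nat_less_iff of_nat_numeral of_nat_power power_Suc)
  assume "2 ^ m \<le> q"
  then have "2 ^ m \<le> int q"
    by (metis of_nat_le_iff of_nat_numeral of_nat_power)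
  then show "even (fst e' - fst e + int p) \<and> even (snd e' - snd e + int q)"
    using coincidence(2) assms(1,2) KM(3) by (simp add: mult.commute)
qed

lemma countN_Suc_le:
  assumes "coprime p q" "q > 0"
  shows "countN p q (Suc m) \<le>
           (if 2 ^ Suc m \<le> q then 3 else if 2 ^ m \<le> q then 5 else 9) * countN p q m"
proof -
  define g where "g e e' = gap_count p q m ((digit_of p q e' - digit_of p q e) / 2 ^ Suc m)" for e e'
  define N where "N = countN p q m"
  define admissible :: "int \<times> int \<Rightarrow> int \<times> int \<Rightarrow> bool" where
    "admissible e e' \<longleftrightarrow> e = e' \<or> q < 2 ^ Suc m \<and>
       (2 ^ m \<le> q \<longrightarrow> even (fst e' - fst e + int p) \<and> even (snd e' - snd e + int q))" for e e'
  have g_le: "g e e' \<le> (if admissible e e' then N else 0)"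
    if "e \<in> digit_vecs" "e' \<in> digit_vecs" for e e'
    using gap_count_offdiag_nonzero[OF assms that] gap_count_le_countN
    by (auto simp: g_def N_def admissible_def)
  have "countN p q (Suc m) \<le> (\<Sum>e\<in>digit_vecs. \<Sum>e'\<in>digit_vecs. g e e')"
  proof -
    have "countN p q (Suc m) \<le>
        (\<Sum>e\<in>digit_vecs. \<Sum>y\<in>digitD p q. gap_count p q m ((y - digit_of p q e) / 2 ^ Suc m))"
      unfolding countN_Suc_eq_sum_gap_count digitD_eq_image_digit_of[of p q]
      by (rule sum_image_le[unfolded o_def]) (simp_all add: digit_vecs_def)
    also have "\<dots> \<le> (\<Sum>e\<in>digit_vecs. \<Sum>e'\<in>digit_vecs. g e e')"
      unfolding digitD_eq_image_digit_of[of p q] g_def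
      by (intro sum_mono sum_image_le[unfolded o_def]) (simp_all add: digit_vecs_def)
    finally show ?thesis .
  qed
  also have "\<dots> \<le> (\<Sum>e\<in>digit_vecs. \<Sum>e'\<in>digit_vecs. if admissible e e' then N else 0)"
    by (intro sum_mono g_le)
  also have "\<dots> \<le> (if 2 ^ Suc m \<le> q then 3 else if 2 ^ m \<le> q then 5 else 9) * N"
    by (auto simp: digit_vecs_def admissible_def)
  finally show ?thesis by (simp add: N_def)
qed

section \<open>Words in Z_n\<close>

fun binary_digits :: "nat \<Rightarrow> nat \<Rightarrow> nat list" where
  "binary_digits 0 m = []"
| "binary_digits (Suc n) m = m div 2 ^ n # binary_digits n (m mod 2 ^ n)"

lemma binary_digits_expansion:
  assumes "m < 2 ^ n"
  shows "length (binary_digits n m) = n" and "set (binary_digits n m) \<subseteq> {0, 1}"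
    and "(\<Sum>i<n. real (binary_digits n m ! i) / 2 ^ (i + 1)) = real m / 2 ^ n"
proof -
  have "length (binary_digits n m) = n \<and> set (binary_digits n m) \<subseteq> {0, 1} \<and>
      (\<Sum>i<n. real (binary_digits n m ! i) / 2 ^ (i + 1)) = real m / 2 ^ n"
    using assms
  proof (induction n arbitrary: m)
    case 0
    then show ?case by simp
  next
    case (Suc n)
    define d r where "d = m div 2 ^ n" and "r = m mod 2 ^ n"
    have "r < 2 ^ n" by (simp add: r_def)
    note IH = Suc.IH[OF this]
    have "d < 2" unfolding d_def by (rule less_mult_imp_div_less) (use Suc.prems in simp)
    have "m = d * 2 ^ n + r"
      unfolding d_def r_def by (rule div_mult_mod_eq[symmetric])
    then have m: "real m = real d * 2 ^ n + real r"
      by (simp only: of_nat_add of_nat_mult of_nat_power of_nat_numeral)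
    have "(\<Sum>i<Suc n. real (binary_digits (Suc n) m ! i) / 2 ^ (i + 1))
        = real d / 2 + (\<Sum>i<n. real (binary_digits n r ! i) / 2 ^ (i + 1)) / 2"
      unfolding sum.lessThan_Suc_shift
      by (simp add: d_def r_def sum_divide_distrib del: sum.lessThan_Suc)
    also have "\<dots> = real m / 2 ^ Suc n"
      using IH unfolding m by (simp add: field_simps)
    finally show ?case
      using IH \<open>d < 2\<close> by (auto simp: d_def r_def)
  qed
  then show "length (binary_digits n m) = n" "set (binary_digits n m) \<subseteq> {0, 1}"
    "(\<Sum>i<n. real (binary_digits n m ! i) / 2 ^ (i + 1)) = real m / 2 ^ n"
    by blast+
qed

definition Z_word :: "nat \<Rightarrow> nat \<Rightarrow> nat \<Rightarrow> nat \<Rightarrow> (nat \<times> nat) list" where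
  "Z_word p q n t = zip (binary_digits n (t * q)) (binary_digits n (t * p))"

lemma Z_word_in_Zset:
  assumes "t * q < 2 ^ n" "p \<le> q"
  shows "Z_word p q n t \<in> Zset p q n"
proof -
  have "t * p < 2 ^ n" using assms by (meson le_less_trans mult_le_mono2)
  note A = binary_digits_expansion[OF assms(1)] and B = binary_digits_expansion[OF this]
  have "set (Z_word p q n t) \<subseteq> {0, 1} \<times> {0, 1}"
    unfolding Z_word_def using A(2) B(2) set_zip_leftD set_zip_rightD by fastforce
  also have "\<dots> = alphB" by (auto simp: alphB_def)
  finally have "set (Z_word p q n t) \<subseteq> alphB" .
  moreover have "(\<Sum>i<n. real (fst (Z_word p q n t ! i)) / 2 ^ (i + 1)) = real (t * q) / 2 ^ n"
    and "(\<Sum>i<n. real (snd (Z_word p q n t ! i)) / 2 ^ (i + 1)) = real (t * p) / 2 ^ n"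
    using A B by (simp_all add: Z_word_def)
  moreover have "real p * (real (t * q) / 2 ^ n) - real q * (real (t * p) / 2 ^ n) = 0"
    by (simp add: field_simps)
  ultimately show ?thesis
    using A B by (simp add: Zset_def Z_word_def)
qed

lemma Z_word_inj:
  assumes "q > 0"
  shows "inj_on (Z_word p q n) {t. t * q < 2 ^ n \<and> t * p < 2 ^ n}"
proof (rule inj_onI)
  fix s t
  assume s: "s \<in> {t. t * q < 2 ^ n \<and> t * p < 2 ^ n}"
    and t: "t \<in> {t. t * q < 2 ^ n \<and> t * p < 2 ^ n}"
    and "Z_word p q n s = Z_word p q n t"
  then have "map fst (Z_word p q n s) = map fst (Z_word p q n t)" by simp
  then have "binary_digits n (s * q) = binary_digits n (t * q)"
    using s t by (simp add: Z_word_def binary_digits_expansion(1))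
  then have "real (s * q) / 2 ^ n = real (t * q) / 2 ^ n"
    using binary_digits_expansion(3)[of "s * q" n] binary_digits_expansion(3)[of "t * q" n] s t by auto
  then show "s = t" using assms by simp
qed

lemma finite_Zset: "finite (Zset p q n)"
proof (rule finite_subset)
  show "Zset p q n \<subseteq> {xs. set xs \<subseteq> alphB \<and> length xs = n}" by (auto simp: Zset_def)
  show "finite {xs. set xs \<subseteq> alphB \<and> length xs = n}"
    by (rule finite_lists_length_eq) (simp add: alphB_def)
qed

lemma card_Zset_ge:
  assumes "k * q < 2 ^ n" "p \<le> q" "q > 0"
  shows "Suc k \<le> card (Zset p q n)"
proof -
  have small: "t * q < 2 ^ n \<and> t * p < 2 ^ n" if "t \<le> k" for t
    using assms that by (meson le_less_trans mult_le_mono1 mult_le_mono2)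
  have "inj_on (Z_word p q n) {..k}"
    by (rule inj_on_subset[OF Z_word_inj[OF assms(3)]]) (use small in auto)
  then have "Suc k = card (Z_word p q n ` {..k})"
    by (simp add: card_image)
  also have "\<dots> \<le> card (Zset p q n)"
    by (intro card_mono finite_Zset) (use Z_word_in_Zset small assms(2) in auto)
  finally show ?thesis .
qed

lemma countN_le_Zset_factor:
  assumes "coprime p q" "q > 0" "p \<le> q" "n \<ge> 1"
  shows "countN p q n \<le> 3 * 2 ^ (card (Zset p q n) - 1) * countN p q (n - 1)"
proof -
  obtain m where n: "n = Suc m" using assms(4) by (cases n) auto
  define factor :: nat where "factor = 3 * 2 ^ (card (Zset p q n) - 1)"
  have "countN p q n \<le> (if 2 ^ Suc m \<le> q then 3 else if 2 ^ m \<le> q then 5 else 9) * countN p q m"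
    unfolding n by (rule countN_Suc_le[OF assms(1,2)])
  also have "\<dots> \<le> factor * countN p q m"
  proof (rule mult_le_mono1)
    have "3 \<le> factor" by (simp add: factor_def)
    moreover have "6 \<le> factor" if "q < 2 ^ n"
    proof -
      have "2 \<le> card (Zset p q n)" using card_Zset_ge[of 1 q n p] that assms(2,3) by simp
      then have "2 ^ 1 \<le> (2::nat) ^ (card (Zset p q n) - 1)" by (intro power_increasing) auto
      then show ?thesis by (simp add: factor_def)
    qed
    moreover have "12 \<le> factor" if "2 * q < 2 ^ n"
    proof -
      have "3 \<le> card (Zset p q n)" using card_Zset_ge[of 2 q n p] that assms(2,3) by simp
      then have "2 ^ 2 \<le> (2::nat) ^ (card (Zset p q n) - 1)" by (intro power_increasing) auto
      then show ?thesis by (simp add: factor_def)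
    qed
    ultimately show "(if 2 ^ Suc m \<le> q then 3 else if 2 ^ m \<le> q then 5 else 9) \<le> factor"
      by (auto simp: n)
  qed
  finally show ?thesis by (simp add: factor_def n)
qed

lemma zeros_in_Zset: "replicate n (0, 0) \<in> Zset p q n"
  by (auto simp: Zset_def alphB_def)

lemma ln_le_sum_SUP_cyl:
  "ereal (ln (3 * 2 ^ (card (Zset p q n) - 1))) \<le> (\<Sum>x\<in>Zset p q n. SUP y\<in>cyl x. phi y)"
proof -
  define Z where "Z = Zset p q n"
  define z0 where "z0 = replicate n (0::nat, 0::nat)"
  have "z0 \<in> Z" "finite Z" by (simp_all add: Z_def z0_def zeros_in_Zset finite_Zset)
  have "ln (3 * 2 ^ (card Z - 1)) = ln 3 + real (card (Z - {z0})) * ln (2::real)"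
    using \<open>z0 \<in> Z\<close> \<open>finite Z\<close> by (simp add: ln_mult ln_realpow)
  then have "ereal (ln (3 * 2 ^ (card Z - 1))) = ereal (ln 3) + (\<Sum>x\<in>Z - {z0}. ereal (ln 2))"
    by simp
  also have "\<dots> \<le> (SUP y\<in>cyl z0. phi y) + (\<Sum>x\<in>Z - {z0}. SUP y\<in>cyl x. phi y)"
  proof (intro add_mono sum_mono)
    show "ereal (ln 3) \<le> (SUP y\<in>cyl z0. phi y)"
      unfolding z0_def by (rule ln3_le_SUP_cyl_zero)
    show "ereal (ln 2) \<le> (SUP y\<in>cyl x. phi y)" if "x \<in> Z - {z0}" for x
      using that by (intro ln2_le_SUP_cyl) (simp add: Z_def Zset_def)
  qed
  also have "\<dots> = (\<Sum>x\<in>Z. SUP y\<in>cyl x. phi y)"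
    using \<open>z0 \<in> Z\<close> \<open>finite Z\<close> by (simp add: sum.remove)
  finally show ?thesis by (simp add: Z_def)
qed

lemma ln_ratio_le:
  assumes "real a \<le> c * real b" "c \<ge> 1"
  shows "ln (real a / real b) \<le> ln c"
proof (cases "a = 0 \<or> b = 0")
  case True
  then show ?thesis using assms(2) by auto
next
  case False
  then have "real a / real b \<le> c" using assms(1) by (simp add: divide_le_eq mult.commute)
  then show ?thesis using False assms(2) by (subst ln_le_cancel_iff) auto
qed

theorem theorem7p6:
  fixes p q n :: nat
  assumes "coprime p q" and "q > 0" and "p \<le> q" and "n \<ge> 2"
  shows "ereal (ln (real (countN p q n) / real (countN p q (n - 1))))
           \<le> (\<Sum>x\<in>Zset p q n. (SUP y\<in>cyl x. phi y))"
proof -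
  define c :: nat where "c = 3 * 2 ^ (card (Zset p q n) - 1)"
  have "countN p q n \<le> c * countN p q (n - 1)"
    unfolding c_def by (rule countN_le_Zset_factor) (use assms in auto)
  then have "ln (real (countN p q n) / real (countN p q (n - 1))) \<le> ln (real c)"
    by (intro ln_ratio_le) (simp_all add: c_def flip: of_nat_mult)
  then have "ereal (ln (real (countN p q n) / real (countN p q (n - 1)))) \<le> ereal (ln (real c))"
    by simp
  also have "\<dots> \<le> (\<Sum>x\<in>Zset p q n. SUP y\<in>cyl x. phi y)"
    unfolding c_def using ln_le_sum_SUP_cyl by simp
  finally show ?thesis .
qed

end
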